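(* For all positive integers $r$ and $k$, $$\bar T(\{1\}_{r-1},k)=\sum_{j=1}^r(-1)^{j-1}\,\bar T(\{1\}_{r-j})\,W(k+j-1,j),$$ with $\bar T(\emptyset):=1$.
   Context: $\{1\}_a$ denotes the sequence of $a$ ones. For positive integers $k_1,\dots,k_r$, $\bar T(k_1,\ldots,k_r):=2^r\sum_{0<n_1<\cdots<n_r}\frac{(-1)^{n_r}}{(2n_1-1)^{k_1}(2n_2-2)^{k_2}\cdots(2n_r-r)^{k_r}}$. $I(k,r)$ is the set of tuples $(k_1,\dots,k_r)$ of positive integers with sum $k$, and $W(k,r):=\sum_{(k_1,\dots,k_r)\in I(k,r)}\bar T(k_1,\dots,k_r)$. *)

theory Defs
  imports Complex_Main
begin

definition idx_tuples :: "nat \<Rightarrow> nat \<Rightarrow> nat list set" where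
  "idx_tuples r N = {ns. length ns = r \<and> sorted_wrt (<) ns \<and> (\<forall>n\<in>set ns. 0 < n) \<and>
                          ns \<noteq> [] \<and> last ns = N}"

definition Tbar_layer :: "nat list \<Rightarrow> nat \<Rightarrow> real" where
  "Tbar_layer ks N = (-1) ^ N *
     (\<Sum>ns\<in>idx_tuples (length ks) N.
        \<Prod>i<length ks. 1 / (2 * real (ns ! i) - real (i + 1)) ^ (ks ! i))"

text \<open>The (conditionally convergent) series is summed in the order of the outermost
  index n_r; empty tuple gives 1.\<close>
definition Tbar :: "nat list \<Rightarrow> real" where
  "Tbar ks = (if ks = [] then 1 else 2 ^ length ks * (\<Sum>N. Tbar_layer ks N))"

definition Iset :: "nat \<Rightarrow> nat \<Rightarrow> nat list set" where
  "Iset k r = {ks. length ks = r \<and> (\<forall>x\<in>set ks. 0 < x) \<and> sum_list ks = k}"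

definition W :: "nat \<Rightarrow> nat \<Rightarrow> real" where
  "W k r = (\<Sum>ks\<in>Iset k r. Tbar ks)"

end

theory Submission
  imports Defs "HOL-Computational_Algebra.Formal_Power_Series" "HOL-Analysis.Summation_Tests"
begin

text \<open>Let \<open>layer ks N\<ge>0\<close> be the inner sum of \<open>Tbar ks\<close> at fixed outer index \<open>n_r = N\<close>.
  Then \<open>layer (ks @ [k]) N\<close> is the partial sum \<open>\<Sum>M<N. layer ks M\<close> divided by \<open>(2 N - r) ^ k\<close>,
  so on the generating series \<open>Tgen ks = \<Sum>N. (-1) ^ N * layer ks N * x ^ N\<close> the operator
  \<open>(1 + x) (2 x d/dx - r)\<close> lowers the last index \<open>k\<close> by one and sends a last index \<open>1\<close> to
  \<open>-x Tgen ks\<close>. It obeys a Leibniz rule, so the right-hand side of the theorem, read as a power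
  series, satisfies the same recursion in \<open>k\<close>; since both sides vanish below degree \<open>r\<close>, where the
  operator is injective, they coincide. Finally \<open>layer = O(N powr (-1/2))\<close> with partial sums
  \<open>O(N powr (1/2))\<close> gives an alternating series of bounded variation, and Abel's limit theorem at
  \<open>x \<rightarrow> 1\<close> turns the identity of series into the identity of values.\<close>

unbundle no vec_syntax
unbundle fps_syntax

section \<open>Layers of the series\<close>

lemma sorted_wrt_less_le_last:
  fixes ns :: "nat list"
  assumes "sorted_wrt (<) ns" "x \<in> set ns"
  shows "x \<le> last ns"
  using assms by (cases ns rule: rev_cases) (auto simp: sorted_wrt_append)

lemma finite_idx_tuples: "finite (idx_tuples r N)"
proof (rule finite_subset)
  show "idx_tuples r N \<subseteq> {ns. set ns \<subseteq> {..N} \<and> length ns = r}"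
    unfolding idx_tuples_def using sorted_wrt_less_le_last by fastforce
qed (simp add: finite_lists_length_eq)

lemma idx_tuples_Suc_0: "idx_tuples (Suc 0) N = (if N > 0 then {[N]} else {})"
  unfolding idx_tuples_def by (auto simp: length_Suc_conv)

lemma idx_tuples_snoc:
  assumes "r \<ge> 1"
  shows "idx_tuples (Suc r) N = (\<lambda>(M, ns). ns @ [N]) ` (SIGMA M:{..<N}. idx_tuples r M)"
proof (rule set_eqI, rule iffI)
  fix xs assume xs: "xs \<in> idx_tuples (Suc r) N"
  define ys where "ys = butlast xs"
  have xs_eq: "xs = ys @ [N]" and len: "length ys = r"
    using xs unfolding ys_def idx_tuples_def by auto
  moreover have "ys \<noteq> []" using len assms by auto
  ultimately have "ys \<in> idx_tuples r (last ys)" "last ys < N"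
    using xs unfolding idx_tuples_def by (auto simp: sorted_wrt_append)
  then show "xs \<in> (\<lambda>(M, ns). ns @ [N]) ` (SIGMA M:{..<N}. idx_tuples r M)"
    using xs_eq by force
next
  fix xs assume "xs \<in> (\<lambda>(M, ns). ns @ [N]) ` (SIGMA M:{..<N}. idx_tuples r M)"
  then obtain M ys where M: "M < N" and ys: "ys \<in> idx_tuples r M" and xs: "xs = ys @ [N]"
    by auto
  have "\<forall>y\<in>set ys. y < N"
    using ys M sorted_wrt_less_le_last unfolding idx_tuples_def by fastforce
  then show "xs \<in> idx_tuples (Suc r) N"
    using ys xs M unfolding idx_tuples_def by (auto simp: sorted_wrt_append)
qed

lemma inj_on_snoc_idx_tuples: "inj_on (\<lambda>(M, ns). ns @ [N]) (SIGMA M:{..<N}. idx_tuples r M)"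
  by (rule inj_onI) (auto simp: idx_tuples_def)

definition tuple_weight :: "nat list \<Rightarrow> nat list \<Rightarrow> real" where
  "tuple_weight ks ns = (\<Prod>i<length ks. 1 / (2 * real (ns ! i) - real (i + 1)) ^ (ks ! i))"

lemma tuple_weight_snoc:
  assumes "length ns = length ks"
  shows "tuple_weight (ks @ [k]) (ns @ [N]) =
           tuple_weight ks ns / (2 * real N - real (length ks + 1)) ^ k"
proof -
  have "tuple_weight ks ns = (\<Prod>i<length ks. 1 / (2 * real ((ns @ [N]) ! i) - real (i + 1)) ^ ((ks @ [k]) ! i))"
    unfolding tuple_weight_def using assms by (intro prod.cong) (auto simp: nth_append)
  then show ?thesis
    unfolding tuple_weight_def using assms by (simp add: nth_append divide_inverse power_one_over)
qed

text \<open>The empty tuple gets the single layer \<open>1\<close> at \<open>N = 0\<close>, matching \<open>Tbar [] = 1\<close>.\<close>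

definition layer :: "nat list \<Rightarrow> nat \<Rightarrow> real" where
  "layer ks N = (if ks = [] then (if N = 0 then 1 else 0) else (-1) ^ N * Tbar_layer ks N)"

definition layer_psum :: "nat list \<Rightarrow> nat \<Rightarrow> real" where
  "layer_psum ks N = (\<Sum>M<N. layer ks M)"

lemma layer_Nil: "layer [] N = (if N = 0 then 1 else 0)"
  by (simp add: layer_def)

lemma layer_Cons: "layer (k # ks) N = (\<Sum>ns\<in>idx_tuples (Suc (length ks)) N. tuple_weight (k # ks) ns)"
  by (simp add: layer_def Tbar_layer_def tuple_weight_def flip: power_mult_distrib)

lemma layer_psum_Nil: "layer_psum [] N = (if N = 0 then 0 else 1)"
  unfolding layer_psum_def layer_Nil by (cases N) (simp_all add: lessThan_Suc_eq_insert_0 sum.reindex)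

lemma layer_psum_Suc: "layer_psum ks (Suc N) = layer_psum ks N + layer ks N"
  by (simp add: layer_psum_def)

lemma layer_snoc:
  "layer (ks @ [k]) N = layer_psum ks N / (2 * real N - real (length ks + 1)) ^ k"
proof (cases ks rule: list.exhaust)
  case Nil
  then show ?thesis
    by (simp add: layer_Cons layer_psum_Nil idx_tuples_Suc_0 tuple_weight_def power_one_over)
next
  case (Cons k' ks')
  define r where "r = length ks"
  have r: "r \<ge> 1" "length (ks @ [k]) = Suc r" using Cons by (auto simp: r_def)
  have "layer (ks @ [k]) N = (\<Sum>ns\<in>idx_tuples (Suc r) N. tuple_weight (ks @ [k]) ns)"
    using Cons by (simp add: layer_Cons r_def)
  also have "\<dots> = (\<Sum>(M, ns)\<in>(SIGMA M:{..<N}. idx_tuples r M). tuple_weight (ks @ [k]) (ns @ [N]))"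
    unfolding idx_tuples_snoc[OF r(1)] sum.reindex[OF inj_on_snoc_idx_tuples]
    by (simp add: case_prod_unfold)
  also have "\<dots> = (\<Sum>M<N. \<Sum>ns\<in>idx_tuples r M. tuple_weight (ks @ [k]) (ns @ [N]))"
    by (subst sum.Sigma) (auto simp: finite_idx_tuples)
  also have "\<dots> = (\<Sum>M<N. \<Sum>ns\<in>idx_tuples r M. tuple_weight ks ns) /
                   (2 * real N - real (length ks + 1)) ^ k"
    by (auto simp: sum_divide_distrib idx_tuples_def tuple_weight_snoc r_def intro!: sum.cong)
  finally show ?thesis
    using Cons by (simp add: layer_psum_def layer_Cons r_def)
qed

lemma layer_eq_0: "N < length ks \<Longrightarrow> layer ks N = 0"
proof (induction ks arbitrary: N rule: rev_induct)
  case (snoc k ks)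
  then have "layer_psum ks N = 0" unfolding layer_psum_def by (intro sum.neutral) auto
  then show ?case by (simp add: layer_snoc)
qed simp

lemma layer_psum_eq_0: "N \<le> length ks \<Longrightarrow> layer_psum ks N = 0"
  unfolding layer_psum_def by (intro sum.neutral) (auto intro: layer_eq_0)

lemma layer_nonneg: "0 \<le> layer ks N"
proof (induction ks arbitrary: N rule: rev_induct)
  case (snoc k ks)
  have "0 \<le> layer_psum ks N" unfolding layer_psum_def using snoc by (intro sum_nonneg) auto
  moreover have "N \<le> length ks \<or> 0 < 2 * real N - real (length ks + 1)" by linarith
  ultimately show ?case by (auto simp: layer_snoc layer_psum_eq_0)
qed (simp add: layer_Nil)

lemma layer_psum_nonneg: "0 \<le> layer_psum ks N"
  unfolding layer_psum_def by (intro sum_nonneg layer_nonneg)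

section \<open>Growth and convergence of the layers\<close>

lemma sqrt_Suc_ge: "2 * sqrt (real N) + 1 / sqrt (real (Suc N)) \<le> 2 * sqrt (real (Suc N))"
proof -
  define a b where "a = sqrt (real N)" and "b = sqrt (real (Suc N))"
  have "0 \<le> a" "0 < b" "b * b = a * a + 1" unfolding a_def b_def by auto
  moreover have "0 \<le> (a - b) * (a - b)" by simp
  ultimately have "1 \<le> 2 * (b - a) * b" by (simp add: algebra_simps)
  with \<open>0 < b\<close> have "1 / b \<le> 2 * (b - a)" by (simp add: divide_simps)
  then show ?thesis unfolding a_def b_def by simp
qed

text \<open>The term \<open>i = 0\<close> is \<open>1 / sqrt 0 = 0\<close>.\<close>

lemma sum_inverse_sqrt_le: "(\<Sum>i<N. 1 / sqrt (real i)) \<le> 2 * sqrt (real N)"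
proof -
  have shifted: "(\<Sum>i<Suc M. 1 / sqrt (real i)) \<le> 2 * sqrt (real M)" for M
  proof (induction M)
    case (Suc M)
    then show ?case using sqrt_Suc_ge[of M] by simp
  qed simp
  show ?thesis
  proof (cases N)
    case (Suc M)
    then show ?thesis using shifted[of M] by (auto intro: order_trans)
  qed simp
qed

lemma layer_snoc_le_inverse_sqrt:
  assumes "k \<ge> 1" "C \<ge> 0" and psum: "\<And>N. layer_psum ks N \<le> C * sqrt (real N)"
  shows "layer (ks @ [k]) N \<le> C / sqrt (real N)"
proof (cases "N \<le> length ks")
  case True
  then show ?thesis using \<open>C \<ge> 0\<close> by (simp add: layer_snoc layer_psum_eq_0)
next
  case False
  define m where "m = 2 * real N - real (length ks + 1)"
  have "real N \<le> m" "1 \<le> real N" using False by (auto simp: m_def)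
  moreover from this have "m \<le> m ^ k" using assms(1) by (intro self_le_power) auto
  ultimately have "layer (ks @ [k]) N \<le> layer_psum ks N / real N"
    unfolding layer_snoc m_def[symmetric]
    by (intro divide_left_mono layer_psum_nonneg) auto
  also have "\<dots> \<le> C * sqrt (real N) / real N" using psum by (intro divide_right_mono) auto
  also have "\<dots> = C / sqrt (real N)"
    by (metis divide_divide_eq_right of_nat_0_le_iff real_div_sqrt)
  finally show ?thesis .
qed

lemma layer_psum_le_sqrt:
  assumes "\<forall>x\<in>set ks. 0 < x"
  obtains C where "C \<ge> 0" "\<And>N. layer_psum ks N \<le> C * sqrt (real N)"
  using assms
proof (induction ks arbitrary: thesis rule: rev_induct)
  case Nil
  show ?case by (rule Nil(1)[of 1]) (simp_all add: layer_psum_Nil)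
next
  case (snoc k ks)
  then obtain C where C: "C \<ge> 0" "\<And>N. layer_psum ks N \<le> C * sqrt (real N)" by auto
  have "layer_psum (ks @ [k]) N \<le> 2 * C * sqrt (real N)" for N
  proof -
    have "layer_psum (ks @ [k]) N \<le> (\<Sum>M<N. C * (1 / sqrt (real M)))"
      unfolding layer_psum_def using snoc.prems(2) C
      by (intro sum_mono) (simp add: layer_snoc_le_inverse_sqrt)
    also have "\<dots> = C * (\<Sum>M<N. 1 / sqrt (real M))" by (simp add: sum_distrib_left)
    also have "\<dots> \<le> C * (2 * sqrt (real N))"
      using C(1) sum_inverse_sqrt_le by (rule mult_left_mono[rotated])
    finally show ?thesis by simp
  qed
  then show ?case using C(1) by (intro snoc.prems(1)[of "2 * C"]) auto
qed

lemma layer_le_inverse_sqrt: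
  assumes "\<forall>x\<in>set ks. 0 < x"
  obtains C where "C \<ge> 0" "\<And>N. N \<ge> 1 \<Longrightarrow> layer ks N \<le> C / sqrt (real N)"
proof (cases ks rule: rev_exhaust)
  case Nil
  then show ?thesis by (intro that[of 0]) (auto simp: layer_Nil)
next
  case (snoc ks' k)
  with assms obtain C where "C \<ge> 0" "\<And>N. layer_psum ks' N \<le> C * sqrt (real N)"
    by (auto elim: layer_psum_le_sqrt)
  then show ?thesis
    using assms snoc layer_snoc_le_inverse_sqrt[of k C ks'] by (intro that[of C]) auto
qed

text \<open>Abel summation by parts against the partial sums \<open>0, 1, 0, 1, \<dots>\<close> of \<open>(-1) ^ N\<close>.\<close>

lemma summable_alternating_bounded_variation:
  fixes e :: "nat \<Rightarrow> real"
  assumes "e \<longlonglongrightarrow> 0" and "summable (\<lambda>N. \<bar>e (Suc N) - e N\<bar>)"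
  shows "summable (\<lambda>N. (-1) ^ N * e N)"
proof -
  define \<sigma> :: "nat \<Rightarrow> real" where "\<sigma> N = (if odd N then 1 else 0)" for N
  have parts: "(-1) ^ N * e N = (\<sigma> (Suc N) * e (Suc N) - \<sigma> N * e N) - \<sigma> (Suc N) * (e (Suc N) - e N)"
    for N unfolding \<sigma>_def by (cases "even N") (auto simp: algebra_simps)
  have "(\<lambda>N. \<sigma> N * e N) \<longlonglongrightarrow> 0"
    by (rule Lim_null_comparison[OF _ tendsto_rabs_zero[OF assms(1)]]) (simp add: \<sigma>_def)
  then have "summable (\<lambda>N. \<sigma> (Suc N) * e (Suc N) - \<sigma> N * e N)"
    by (rule telescope_summable)
  moreover have "summable (\<lambda>N. \<sigma> (Suc N) * (e (Suc N) - e N))"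
    by (rule summable_comparison_test[OF _ assms(2)]) (auto simp: \<sigma>_def)
  ultimately show ?thesis unfolding parts by (rule summable_diff)
qed

lemma summable_inverse_mult_sqrt: "summable (\<lambda>N. 1 / (real N * sqrt (real N)))"
proof -
  have "1 / (real N * sqrt (real N)) = real N powr - (1 + 1/2)" for N
    by (cases "N = 0") (simp_all only: powr_minus powr_add powr_half_sqrt, simp_all add: divide_inverse)
  then show ?thesis using summable_real_powr_iff[of "- (1 + 1/2)"] by simp
qed

lemma power_diff_le_mult_diff:
  fixes a b :: real
  assumes "0 \<le> b" "b \<le> a" "a \<le> 1"
  shows "a ^ k - b ^ k \<le> real k * (a - b)"
proof (induction k)
  case (Suc k)
  have "a ^ Suc k - b ^ Suc k = a * (a ^ k - b ^ k) + b ^ k * (a - b)" by (simp add: algebra_simps)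
  also have "\<dots> \<le> 1 * (real k * (a - b)) + 1 * (a - b)"
  proof (rule add_mono)
    have "a ^ k - b ^ k \<ge> 0" using assms by (simp add: power_mono)
    then show "a * (a ^ k - b ^ k) \<le> 1 * (real k * (a - b))"
      using Suc assms by (intro mult_mono) auto
    have "b ^ k \<le> 1" using assms by (simp add: power_le_one)
    then show "b ^ k * (a - b) \<le> 1 * (a - b)" using assms by (intro mult_right_mono) auto
  qed
  finally show ?case by (simp add: algebra_simps)
qed simp

lemma inverse_power_diff_le:
  fixes m :: real
  assumes "real N \<le> m" "N \<ge> 1"
  shows "1 / m ^ k - 1 / (m + 2) ^ k \<le> real k * (2 / (real N * real N))"
proof -
  have m: "1 \<le> m" using assms by simp
  have "1 / m ^ k - 1 / (m + 2) ^ k = (1 / m) ^ k - (1 / (m + 2)) ^ k" by (simp add: power_one_over)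
  also have "\<dots> \<le> real k * (1 / m - 1 / (m + 2))"
    using m by (intro power_diff_le_mult_diff) (auto simp: divide_simps)
  also have "\<dots> = real k * (2 / (m * (m + 2)))" using m by (simp add: field_simps)
  also have "\<dots> \<le> real k * (2 / (real N * real N))"
    using assms m by (intro mult_left_mono divide_left_mono mult_mono) auto
  finally show ?thesis .
qed

lemma layer_snoc_Suc_diff:
  assumes "m = 2 * real N - real (length ks + 1)"
  shows "layer (ks @ [k]) (Suc N) - layer (ks @ [k]) N =
           layer ks N / (m + 2) ^ k - layer_psum ks N * (1 / m ^ k - 1 / (m + 2) ^ k)"
proof -
  have "2 * real (Suc N) - real (length ks + 1) = m + 2" using assms by simp
  then show ?thesis
    unfolding layer_snoc layer_psum_Suc assms[symmetric]
    by (simp add: add_divide_distrib right_diff_distrib add.commute)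
qed

lemma layer_div_power_le:
  assumes "m = 2 * real N - real (length ks + 1)" "k \<ge> 1" "N \<ge> 1" "C \<ge> 0"
    and "layer ks N \<le> C / sqrt (real N)"
  shows "0 \<le> layer ks N / (m + 2) ^ k \<and> layer ks N / (m + 2) ^ k \<le> C / (real N * sqrt (real N))"
proof (cases "N < length ks")
  case False
  then have "real N \<le> m + 2" "m + 2 \<le> (m + 2) ^ k"
    using assms(1,2) by (auto intro!: self_le_power)
  then have "layer ks N / (m + 2) ^ k \<le> layer ks N / real N"
    using assms(3) by (intro divide_left_mono) (auto simp: layer_nonneg)
  also have "\<dots> \<le> C / sqrt (real N) / real N"
    using assms(3,5) by (intro divide_right_mono) auto
  finally show ?thesis
    using \<open>real N \<le> m + 2\<close> assms(3) by (simp add: mult.commute layer_nonneg)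
qed (use assms(4) in \<open>simp add: layer_eq_0\<close>)

lemma layer_psum_mult_power_diff_le:
  assumes "m = 2 * real N - real (length ks + 1)" "N \<ge> 1" "C \<ge> 0"
    and "layer_psum ks N \<le> C * sqrt (real N)"
  shows "0 \<le> layer_psum ks N * (1 / m ^ k - 1 / (m + 2) ^ k) \<and>
         layer_psum ks N * (1 / m ^ k - 1 / (m + 2) ^ k) \<le> 2 * real k * C / (real N * sqrt (real N))"
proof (cases "N \<le> length ks")
  case False
  then have "real N \<le> m" using assms(1) by simp
  then have diff: "0 \<le> 1 / m ^ k - 1 / (m + 2) ^ k"
    using assms(2) by (simp add: divide_simps power_mono)
  have sqrt_N: "sqrt (real N) * sqrt (real N) = real N" by simp
  have "layer_psum ks N * (1 / m ^ k - 1 / (m + 2) ^ k) \<le>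
          C * sqrt (real N) * (real k * (2 / (real N * real N)))"
    using assms(2-4) \<open>real N \<le> m\<close> diff
    by (intro mult_mono inverse_power_diff_le) (auto simp: layer_psum_nonneg)
  also have "\<dots> = 2 * real k * C / (real N * sqrt (real N))"
    using assms(2) by (subst (2 3) sqrt_N[symmetric]) (simp add: field_simps)
  finally show ?thesis using diff by (simp add: layer_psum_nonneg)
qed (use assms(3) in \<open>simp add: layer_psum_eq_0\<close>)

lemma layer_snoc_variation_le:
  assumes "\<forall>x\<in>set ks. 0 < x" "k \<ge> 1"
  obtains K where "\<And>N. N \<ge> 1 \<Longrightarrow>
    \<bar>layer (ks @ [k]) (Suc N) - layer (ks @ [k]) N\<bar> \<le> K * (1 / (real N * sqrt (real N)))"
proof -
  obtain C1 where C1: "C1 \<ge> 0" "\<And>N. N \<ge> 1 \<Longrightarrow> layer ks N \<le> C1 / sqrt (real N)"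
    using layer_le_inverse_sqrt[OF assms(1)] by blast
  obtain C2 where C2: "C2 \<ge> 0" "\<And>N. layer_psum ks N \<le> C2 * sqrt (real N)"
    using layer_psum_le_sqrt[OF assms(1)] by blast
  have "\<bar>layer (ks @ [k]) (Suc N) - layer (ks @ [k]) N\<bar> \<le>
          (C1 + 2 * real k * C2) * (1 / (real N * sqrt (real N)))" if "N \<ge> 1" for N
  proof -
    define m where "m = 2 * real N - real (length ks + 1)"
    have "(C1 + 2 * real k * C2) * (1 / (real N * sqrt (real N))) =
            C1 / (real N * sqrt (real N)) + 2 * real k * C2 / (real N * sqrt (real N))"
      by (simp add: add_divide_distrib)
    then show ?thesis
      unfolding layer_snoc_Suc_diff[OF m_def] abs_le_iff
      using layer_div_power_le[OF m_def assms(2) that C1(1) C1(2)[OF that]]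
        layer_psum_mult_power_diff_le[OF m_def that C2(1) C2(2), of k]
      by linarith
  qed
  then show ?thesis by (rule that)
qed

lemma summable_signed_layer:
  assumes "\<forall>x\<in>set ks. 0 < x"
  shows "summable (\<lambda>N. (-1) ^ N * layer ks N)"
proof (cases ks rule: rev_exhaust)
  case Nil
  then show ?thesis by (intro summable_finite[of "{0}"]) (simp_all add: layer_Nil)
next
  case (snoc ks' k)
  with assms have pos: "\<forall>x\<in>set ks'. 0 < x" and "k \<ge> 1" by auto
  obtain C where C: "C \<ge> 0" "\<And>N. layer_psum ks' N \<le> C * sqrt (real N)"
    using layer_psum_le_sqrt[OF pos] by blast
  have "(\<lambda>N. C / sqrt (real N)) \<longlonglongrightarrow> 0"
    by (intro tendsto_divide_0[OF tendsto_const] filterlim_at_top_imp_at_infinity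
        filterlim_compose[OF sqrt_at_top filterlim_real_sequentially])
  then have "(\<lambda>N. layer ks N) \<longlonglongrightarrow> 0"
    by (rule Lim_null_comparison[rotated])
       (use C \<open>k \<ge> 1\<close> in \<open>simp add: snoc layer_nonneg layer_snoc_le_inverse_sqrt\<close>)
  moreover obtain K where "\<And>N. N \<ge> 1 \<Longrightarrow>
      \<bar>layer ks (Suc N) - layer ks N\<bar> \<le> K * (1 / (real N * sqrt (real N)))"
    using layer_snoc_variation_le[OF pos \<open>k \<ge> 1\<close>] snoc by blast
  then have "summable (\<lambda>N. \<bar>layer ks (Suc N) - layer ks N\<bar>)"
    by (intro summable_comparison_test'[OF summable_mult[OF summable_inverse_mult_sqrt]]) auto
  ultimately show ?thesis by (rule summable_alternating_bounded_variation)
qed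

section \<open>Generating series and the lowering operator\<close>

text \<open>\<open>Tbar ks\<close> is \<open>2 ^ length ks\<close> times the Abel limit of \<open>Tgen ks\<close> at \<open>x = 1\<close>.\<close>

definition Tgen :: "nat list \<Rightarrow> real fps" where
  "Tgen ks = Abs_fps (\<lambda>N. (-1) ^ N * layer ks N)"

text \<open>\<open>euler_op a\<close> multiplies the \<open>N\<close>-th coefficient by \<open>2 N - a\<close>, undoing one power of the last
  denominator of \<open>Tgen (ks @ [k])\<close> when \<open>a = length ks + 1\<close>; the factor \<open>1 + X\<close> of \<open>lower_op\<close> turns
  the signed partial sums of \<open>layer ks\<close> back into its signed terms.\<close>

definition euler_op :: "nat \<Rightarrow> real fps \<Rightarrow> real fps" where
  "euler_op a f = fps_const 2 * (fps_X * fps_deriv f) - fps_const (real a) * f"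

definition lower_op :: "nat \<Rightarrow> real fps \<Rightarrow> real fps" where
  "lower_op a f = (1 + fps_X) * euler_op a f"

lemma Tgen_nth: "Tgen ks $ N = (-1) ^ N * layer ks N"
  by (simp add: Tgen_def)

lemma Tgen_Nil: "Tgen [] = 1"
  by (rule fps_ext) (simp add: Tgen_nth layer_Nil)

lemma euler_op_nth: "euler_op a f $ N = (2 * real N - real a) * f $ N"
proof -
  have "(fps_X * fps_deriv f) $ N = real N * f $ N" by (cases N) (simp_all add: algebra_simps)
  then show ?thesis unfolding euler_op_def by (simp add: algebra_simps)
qed

lemma euler_op_Tgen_snoc:
  assumes "k \<ge> 2"
  shows "euler_op (length ks + 1) (Tgen (ks @ [k])) = Tgen (ks @ [k - 1])"
proof (rule fps_ext)
  fix N
  define m where "m = 2 * real N - real (length ks + 1)"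
  obtain j where k: "k = j + 2" using assms by (metis le_add_diff_inverse2)
  show "euler_op (length ks + 1) (Tgen (ks @ [k])) $ N = Tgen (ks @ [k - 1]) $ N"
    unfolding euler_op_nth Tgen_nth layer_snoc m_def[symmetric] k
    by (cases "m = 0") (simp_all add: field_simps)
qed

lemma lower_op_Tgen_snoc_one: "lower_op (length ks + 1) (Tgen (ks @ [1])) = - (fps_X * Tgen ks)"
proof (rule fps_ext)
  fix N
  define e where "e = euler_op (length ks + 1) (Tgen (ks @ [1]))"
  have e: "e $ N = (-1) ^ N * layer_psum ks N" for N
  proof (cases "2 * real N - real (length ks + 1) = 0")
    case True
    then have "N \<le> length ks" by linarith
    with True show ?thesis by (simp add: e_def euler_op_nth layer_psum_eq_0)
  qed (simp add: e_def euler_op_nth Tgen_nth layer_snoc)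
  show "lower_op (length ks + 1) (Tgen (ks @ [1])) $ N = (- (fps_X * Tgen ks)) $ N"
    unfolding lower_op_def e_def[symmetric]
    by (cases N) (simp_all add: e layer_psum_Suc Tgen_nth layer_psum_def algebra_simps)
qed

lemma lower_op_mult: "lower_op (a + b) (f * g) = lower_op a f * g + f * lower_op b g"
  unfolding lower_op_def euler_op_def by (simp add: algebra_simps flip: fps_const_add)

lemma lower_op_add: "lower_op a (f + g) = lower_op a f + lower_op a g"
  unfolding lower_op_def euler_op_def by (simp add: algebra_simps)

lemma lower_op_0: "lower_op a 0 = 0"
  unfolding lower_op_def euler_op_def by simp

lemma lower_op_sum: "lower_op a (\<Sum>i\<in>S. f i) = (\<Sum>i\<in>S. lower_op a (f i))"
  by (induction S rule: infinite_finite_induct) (simp_all add: lower_op_add lower_op_0)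

lemma lower_op_const_mult: "lower_op a (fps_const c * f) = fps_const c * lower_op a f"
  unfolding lower_op_def euler_op_def by (simp add: algebra_simps)

lemma lower_op_0_1: "lower_op 0 1 = 0"
  unfolding lower_op_def euler_op_def by simp

definition vanishes_below :: "nat \<Rightarrow> real fps \<Rightarrow> bool" where
  "vanishes_below a f \<longleftrightarrow> (\<forall>N<a. f $ N = 0)"

lemma vanishes_below_Tgen: "vanishes_below (length ks) (Tgen ks)"
  unfolding vanishes_below_def Tgen_nth by (simp add: layer_eq_0)

lemma vanishes_below_mult:
  assumes "vanishes_below a f" "vanishes_below b g"
  shows "vanishes_below (a + b) (f * g)"
  unfolding vanishes_below_def fps_mult_nth
proof (intro allI impI sum.neutral ballI)
  fix N i assume "N < a + b" "i \<in> {0..N}"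
  then have "i < a \<or> N - i < b" by auto
  then show "f $ i * g $ (N - i) = 0" using assms unfolding vanishes_below_def by auto
qed

lemma vanishes_below_sum:
  "(\<And>i. i \<in> S \<Longrightarrow> vanishes_below a (f i)) \<Longrightarrow> vanishes_below a (\<Sum>i\<in>S. f i)"
  unfolding vanishes_below_def fps_sum_nth by (auto intro!: sum.neutral)

lemma vanishes_below_const_mult: "vanishes_below a f \<Longrightarrow> vanishes_below a (fps_const c * f)"
  unfolding vanishes_below_def by simp

text \<open>The factor \<open>2 N - a\<close> of \<open>euler_op a\<close> vanishes only at \<open>N = a / 2 < a\<close>.\<close>

lemma lower_op_inj:
  assumes "a \<ge> 1" "lower_op a f = lower_op a g" "vanishes_below a f" "vanishes_below a g"
  shows "f = g"
proof (rule fps_ext)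
  fix N
  have "(1 + fps_X :: real fps) $ 0 \<noteq> 0" by simp
  then have "(1 + fps_X :: real fps) \<noteq> 0" by (metis fps_zero_nth)
  with assms(2) have "euler_op a f $ N = euler_op a g $ N" unfolding lower_op_def by simp
  then have "(2 * real N - real a) * f $ N = (2 * real N - real a) * g $ N"
    by (simp add: euler_op_nth)
  moreover have "2 * real N - real a = 0 \<Longrightarrow> N < a" using assms(1) by linarith
  ultimately show "f $ N = g $ N" using assms(3,4) unfolding vanishes_below_def by fastforce
qed

lemma finite_Iset: "finite (Iset w j)"
proof (rule finite_subset)
  show "Iset w j \<subseteq> {xs. set xs \<subseteq> {..w} \<and> length xs = j}"
    unfolding Iset_def by (auto dest: member_le_sum_list)
qed (simp add: finite_lists_length_eq)

lemma Iset_eq_empty: "w < j \<Longrightarrow> Iset w j = {}"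
proof -
  have "length c \<le> sum_list c" if "\<forall>x\<in>set c. 0 < x" for c :: "nat list"
    using that by (induction c) auto
  then show "w < j \<Longrightarrow> Iset w j = {}" unfolding Iset_def by fastforce
qed

lemma Iset_0: "Iset w 0 = (if w = 0 then {[]} else {})"
  unfolding Iset_def by auto

lemma Iset_last_positive: "c \<in> Iset w j \<Longrightarrow> j \<ge> 1 \<Longrightarrow> c \<noteq> [] \<and> last c > 0"
  unfolding Iset_def by (cases c rule: rev_cases) auto

lemma Iset_split:
  assumes "j \<ge> 1" "w \<ge> 1"
  shows "Iset w j = (\<lambda>c. c @ [1]) ` Iset (w - 1) (j - 1) \<union>
                    (\<lambda>c. butlast c @ [Suc (last c)]) ` Iset (w - 1) j"
proof (rule set_eqI, rule iffI)
  fix c assume c: "c \<in> Iset w j"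
  then have "c \<noteq> []" using assms unfolding Iset_def by auto
  then obtain b a where c_eq: "c = b @ [a]" by (cases c rule: rev_cases) auto
  show "c \<in> (\<lambda>c. c @ [1]) ` Iset (w - 1) (j - 1) \<union> (\<lambda>c. butlast c @ [Suc (last c)]) ` Iset (w - 1) j"
  proof (cases "a = 1")
    case True
    then have "b \<in> Iset (w - 1) (j - 1)" using c unfolding c_eq Iset_def by auto
    then show ?thesis using c_eq True by auto
  next
    case False
    then have "b @ [a - 1] \<in> Iset (w - 1) j" using c assms unfolding c_eq Iset_def by auto
    moreover have "c = butlast (b @ [a - 1]) @ [Suc (last (b @ [a - 1]))]"
      using c False unfolding c_eq Iset_def by auto
    ultimately show ?thesis by blast
  qed
next
  fix c assume "c \<in> (\<lambda>c. c @ [1]) ` Iset (w - 1) (j - 1) \<union> (\<lambda>c. butlast c @ [Suc (last c)]) ` Iset (w - 1) j"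
  then show "c \<in> Iset w j"
  proof
    assume "c \<in> (\<lambda>c. butlast c @ [Suc (last c)]) ` Iset (w - 1) j"
    then obtain b where b: "b \<in> Iset (w - 1) j" and c: "c = butlast b @ [Suc (last b)]" by auto
    have "sum_list b = sum_list (butlast b @ [last b])" using Iset_last_positive[OF b assms(1)] by simp
    then have "sum_list b = sum_list (butlast b) + last b" by simp
    moreover have "set (butlast b) \<subseteq> set b" by (simp add: in_set_butlastD subsetI)
    ultimately show ?thesis using b c assms unfolding Iset_def by auto
  qed (use assms in \<open>auto simp: Iset_def\<close>)
qed

definition Wgen :: "nat \<Rightarrow> nat \<Rightarrow> real fps" where
  "Wgen j w = (\<Sum>c\<in>Iset w j. Tgen c)"

lemma Wgen_0: "Wgen 0 w = (if w = 0 then 1 else 0)"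
  unfolding Wgen_def Iset_0 by (simp add: Tgen_Nil)

lemma Wgen_eq_0: "w < j \<Longrightarrow> Wgen j w = 0"
  unfolding Wgen_def by (simp add: Iset_eq_empty)

lemma vanishes_below_Wgen: "vanishes_below j (Wgen j w)"
  unfolding Wgen_def
proof (rule vanishes_below_sum)
  fix c assume "c \<in> Iset w j"
  then show "vanishes_below j (Tgen c)" using vanishes_below_Tgen[of c] by (simp add: Iset_def)
qed

lemma lower_op_Tgen_ones:
  assumes "m \<ge> 1"
  shows "lower_op m (Tgen (replicate m 1)) = - (fps_X * Tgen (replicate (m - 1) 1))"
proof -
  have "replicate m (1::nat) = replicate (m - 1) 1 @ [1]"
    using assms by (cases m) (simp_all add: replicate_append_same)
  then show ?thesis using lower_op_Tgen_snoc_one[of "replicate (m - 1) 1"] assms by simp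
qed

lemma lower_op_Wgen:
  assumes "j \<ge> 1" "w \<ge> 1"
  shows "lower_op j (Wgen j w) = (1 + fps_X) * Wgen j (w - 1) - fps_X * Wgen (j - 1) (w - 1)"
proof -
  let ?A = "(\<lambda>c. c @ [1]) ` Iset (w - 1) (j - 1)"
  let ?B = "(\<lambda>c. butlast c @ [Suc (last c)]) ` Iset (w - 1) j"
  have inj_A: "inj_on (\<lambda>c. c @ [1::nat]) (Iset (w - 1) (j - 1))" by (auto intro: inj_onI)
  have inj_B: "inj_on (\<lambda>c. butlast c @ [Suc (last c)]) (Iset (w - 1) j)"
  proof (rule inj_onI)
    fix x y assume "x \<in> Iset (w - 1) j" "y \<in> Iset (w - 1) j"
      and "butlast x @ [Suc (last x)] = butlast y @ [Suc (last y)]"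
    then show "x = y" using Iset_last_positive[OF _ assms(1)] by (metis append_butlast_last_id
        butlast_snoc last_snoc nat.inject)
  qed
  have disjoint: "?A \<inter> ?B = {}" by (auto dest!: Iset_last_positive[OF _ assms(1)])
  have lower_A: "lower_op j (Tgen (c @ [1])) = - (fps_X * Tgen c)" if "c \<in> Iset (w - 1) (j - 1)" for c
    using that assms(1) lower_op_Tgen_snoc_one[of c] unfolding Iset_def by auto
  have "lower_op j (Wgen j w) = (\<Sum>c\<in>?A. lower_op j (Tgen c)) + (\<Sum>c\<in>?B. lower_op j (Tgen c))"
    unfolding Wgen_def lower_op_sum Iset_split[OF assms]
    by (intro sum.union_disjoint finite_imageI finite_Iset disjoint)
  also have "(\<Sum>c\<in>?A. lower_op j (Tgen c)) = (\<Sum>c\<in>Iset (w - 1) (j - 1). - (fps_X * Tgen c))"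
    unfolding sum.reindex[OF inj_A] by (intro sum.cong refl) (simp only: comp_apply lower_A)
  also have "(\<Sum>c\<in>?B. lower_op j (Tgen c)) = (\<Sum>c\<in>Iset (w - 1) j. (1 + fps_X) * Tgen c)"
  proof (unfold sum.reindex[OF inj_B] comp_def, intro sum.cong refl)
    fix c assume c: "c \<in> Iset (w - 1) j"
    then have "length (butlast c) + 1 = j" "Suc (last c) \<ge> 2" "butlast c @ [last c] = c"
      using Iset_last_positive[OF c assms(1)] unfolding Iset_def by auto
    then show "lower_op j (Tgen (butlast c @ [Suc (last c)])) = (1 + fps_X) * Tgen c"
      using euler_op_Tgen_snoc[of "Suc (last c)" "butlast c"] by (simp add: lower_op_def)
  qed
  finally show ?thesis unfolding Wgen_def by (simp add: sum_distrib_left sum_negf)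
qed

section \<open>The identity of generating series\<close>

text \<open>The right-hand side of the theorem with every \<open>Tbar\<close> replaced by its generating series.\<close>

definition Rgen :: "nat \<Rightarrow> nat \<Rightarrow> real fps" where
  "Rgen r k = (\<Sum>j=1..r. fps_const ((-1) ^ (j - 1)) *
                 (Tgen (replicate (r - j) 1) * Wgen j (k + j - 1)))"

lemma vanishes_below_Rgen: "vanishes_below r (Rgen r k)"
  unfolding Rgen_def
proof (intro vanishes_below_sum vanishes_below_const_mult)
  fix j assume "j \<in> {1..r}"
  then show "vanishes_below r (Tgen (replicate (r - j) 1) * Wgen j (k + j - 1))"
    using vanishes_below_mult[OF vanishes_below_Tgen vanishes_below_Wgen, of "replicate (r - j) 1" j]
    by simp
qed

text \<open>Applying \<open>lower_op r\<close> to the \<open>j\<close>-th term of \<open>Rgen r k\<close> gives \<open>1 + X\<close> times the \<open>j\<close>-th term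
  of \<open>Rgen r (k - 1)\<close> plus \<open>X\<close> times a difference of consecutive cross terms, which telescope.\<close>

definition Rgen_cross :: "nat \<Rightarrow> nat \<Rightarrow> nat \<Rightarrow> real fps" where
  "Rgen_cross r k i = fps_const ((-1) ^ i) * (Tgen (replicate (r - 1 - i) 1) * Wgen i (k + i - 1))"

lemma lower_op_Rgen_term:
  assumes "1 \<le> j" "j \<le> r" "k \<ge> 1"
  shows "fps_const ((-1) ^ (j - 1)) * lower_op r (Tgen (replicate (r - j) 1) * Wgen j (k + j - 1)) =
    (1 + fps_X) * (fps_const ((-1) ^ (j - 1)) * (Tgen (replicate (r - j) 1) * Wgen j (k - 1 + j - 1))) +
    fps_X * ((if j < r then Rgen_cross r k j else 0) - Rgen_cross r k (j - 1))"
proof -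
  define c where "c = fps_const ((-1) ^ (j - 1) :: real)"
  have sign: "fps_const ((-1) ^ j :: real) = - c"
    using assms(1) by (cases j) (simp_all add: c_def)
  have leibniz: "lower_op r (Tgen (replicate (r - j) 1) * Wgen j (k + j - 1)) =
      lower_op (r - j) (Tgen (replicate (r - j) 1)) * Wgen j (k + j - 1) +
      Tgen (replicate (r - j) 1) * lower_op j (Wgen j (k + j - 1))"
    using lower_op_mult[of "r - j" j] assms(2) by simp
  have lower_W: "lower_op j (Wgen j (k + j - 1)) =
      (1 + fps_X) * Wgen j (k - 1 + j - 1) - fps_X * Wgen (j - 1) (k - 1 + j - 1)"
    using lower_op_Wgen[OF assms(1), of "k + j - 1"] assms by (simp add: diff_add_eq)
  have "r - 1 - (j - 1) = r - j" "k + (j - 1) - 1 = k - 1 + j - 1" using assms by auto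
  then have cross_prev:
    "Rgen_cross r k (j - 1) = c * (Tgen (replicate (r - j) 1) * Wgen (j - 1) (k - 1 + j - 1))"
    by (simp add: Rgen_cross_def c_def)
  have cross: "Rgen_cross r k j = - c * (Tgen (replicate (r - 1 - j) 1) * Wgen j (k + j - 1))"
    unfolding Rgen_cross_def sign ..
  show ?thesis
  proof (cases "j < r")
    case True
    have "lower_op (r - j) (Tgen (replicate (r - j) 1)) = - (fps_X * Tgen (replicate (r - 1 - j) 1))"
      using lower_op_Tgen_ones[of "r - j"] True by (simp add: diff_commute)
    then show ?thesis
      unfolding leibniz lower_W cross_prev cross c_def[symmetric] using True
      by (simp add: algebra_simps)
  next
    case False
    then have "r - j = 0" using assms(2) by simp
    then show ?thesis
      unfolding leibniz lower_W cross_prev c_def[symmetric] using False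
      by (simp add: algebra_simps Tgen_Nil lower_op_0_1)
  qed
qed

lemma lower_op_Rgen:
  assumes "r \<ge> 1" "k \<ge> 1"
  shows "lower_op r (Rgen r k) =
           (1 + fps_X) * Rgen r (k - 1) - fps_X * (Tgen (replicate (r - 1) 1) * Wgen 0 (k - 1))"
proof -
  obtain r' where r': "r = Suc r'" using assms(1) by (cases r) auto
  have "lower_op r (Rgen r k) = (\<Sum>j=1..r. fps_const ((-1) ^ (j - 1)) *
          lower_op r (Tgen (replicate (r - j) 1) * Wgen j (k + j - 1)))"
    unfolding Rgen_def lower_op_sum lower_op_const_mult ..
  also have "\<dots> = (\<Sum>j=1..r. (1 + fps_X) * (fps_const ((-1) ^ (j - 1)) *
          (Tgen (replicate (r - j) 1) * Wgen j (k - 1 + j - 1))) +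
          fps_X * ((if j < r then Rgen_cross r k j else 0) - Rgen_cross r k (j - 1)))"
    using assms(2) by (intro sum.cong refl lower_op_Rgen_term) auto
  also have "\<dots> = (1 + fps_X) * Rgen r (k - 1) +
      fps_X * ((\<Sum>j=1..r. (if j < r then Rgen_cross r k j else 0)) - (\<Sum>j=1..r. Rgen_cross r k (j - 1)))"
    unfolding Rgen_def by (simp add: sum.distrib sum_distrib_left sum_subtractf right_diff_distrib)
  also have "(\<Sum>j=1..r. (if j < r then Rgen_cross r k j else 0)) = (\<Sum>j=1..r'. Rgen_cross r k j)"
    unfolding r' by simp
  also have "(\<Sum>j=1..r. Rgen_cross r k (j - 1)) = Rgen_cross r k 0 + (\<Sum>j=1..r'. Rgen_cross r k j)"
    unfolding r' One_nat_def sum.shift_bounds_cl_Suc_ivl by (simp add: sum.atLeast_Suc_atMost)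
  finally show ?thesis by (simp add: Rgen_cross_def algebra_simps)
qed

theorem Tgen_ones_snoc_eq_Rgen:
  assumes "r \<ge> 1" "k \<ge> 1"
  shows "Tgen (replicate (r - 1) 1 @ [k]) = Rgen r k"
proof -
  define ks where "ks = replicate (r - 1) (1::nat)"
  have len: "length ks + 1 = r" "length (ks @ [k']) = r" for k' using assms(1) by (auto simp: ks_def)
  have vanish: "vanishes_below r (Tgen (ks @ [k']))" for k'
    using vanishes_below_Tgen[of "ks @ [k']"] len by simp
  have "Tgen (ks @ [Suc k']) = Rgen r (Suc k')" for k'
  proof (induction k')
    case 0
    have "ks @ [Suc 0] = replicate r 1"
      using assms(1) by (cases r) (simp_all add: ks_def replicate_append_same)
    then have "lower_op r (Tgen (ks @ [Suc 0])) = lower_op r (Rgen r (Suc 0))"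
      using lower_op_Tgen_ones[OF assms(1)] lower_op_Rgen[OF assms(1), of 1]
      by (simp add: Rgen_def Wgen_eq_0 Wgen_0)
    then show ?case using lower_op_inj[OF assms(1)] vanish vanishes_below_Rgen by blast
  next
    case (Suc k')
    have "lower_op r (Tgen (ks @ [Suc (Suc k')])) = (1 + fps_X) * Tgen (ks @ [Suc k'])"
      using euler_op_Tgen_snoc[of "Suc (Suc k')" ks] len(1) by (simp add: lower_op_def)
    also have "\<dots> = lower_op r (Rgen r (Suc (Suc k')))"
      using Suc lower_op_Rgen[OF assms(1), of "Suc (Suc k')"] by (simp add: Wgen_0)
    finally show ?case using lower_op_inj[OF assms(1)] vanish vanishes_below_Rgen by blast
  qed
  then show ?thesis using assms(2) unfolding ks_def by (metis Suc_pred' less_eq_Suc_le One_nat_def)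
qed

section \<open>Abel's limit theorem\<close>

lemma abel_summation_identity:
  fixes a :: "nat \<Rightarrow> real"
  assumes "\<And>n. \<bar>a n\<bar> \<le> K" "\<And>n. \<bar>sum a {..n} - s\<bar> \<le> K'" "0 \<le> x" "x < 1"
  shows "(\<Sum>n. a n * x ^ n) - s = (1 - x) * (\<Sum>n. (sum a {..n} - s) * x ^ n)"
proof -
  have geometric: "summable (\<lambda>n. x ^ n)" "(\<Sum>n. x ^ n) = 1 / (1 - x)"
    using assms(3,4) by (simp_all add: suminf_geometric)
  have abs_a: "summable (\<lambda>n. norm (a n * x ^ n))"
    by (rule summable_comparison_test[OF _ summable_mult[OF geometric(1), of K]])
       (use assms in \<open>auto simp: abs_mult intro!: mult_right_mono\<close>)
  have abs_geometric: "summable (\<lambda>n. norm (x ^ n))" using geometric(1) assms(3) by simp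
  have product: "(\<Sum>i\<le>n. a i * x ^ i * x ^ (n - i)) = sum a {..n} * x ^ n" for n
    by (simp add: sum_distrib_right mult.assoc power_add[symmetric])
  have partial: "summable (\<lambda>n. sum a {..n} * x ^ n)"
    using summable_Cauchy_product[OF abs_a abs_geometric] unfolding product .
  have "(\<Sum>n. a n * x ^ n) = (1 - x) * (\<Sum>n. sum a {..n} * x ^ n)"
    using Cauchy_product[OF abs_a abs_geometric] geometric assms(4)
    unfolding product by (simp add: field_simps)
  moreover have "(\<Sum>n. (sum a {..n} - s) * x ^ n) = (\<Sum>n. sum a {..n} * x ^ n) - s / (1 - x)"
    using suminf_diff[OF partial summable_mult[OF geometric(1), of s]]
          suminf_mult[OF geometric(1), of s] geometric(2)
    by (simp add: left_diff_distrib)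
  ultimately show ?thesis using assms(4) by (simp add: field_simps)
qed

lemma abel_weighted_sum_le:
  fixes u :: "nat \<Rightarrow> real"
  assumes "\<And>n. \<bar>u n\<bar> \<le> B" "\<And>n. n \<ge> N \<Longrightarrow> \<bar>u n\<bar> \<le> e" "0 \<le> x" "x < 1"
  shows "(1 - x) * \<bar>\<Sum>n. u n * x ^ n\<bar> \<le> e + (1 - x) * (\<Sum>n<N. \<bar>u n\<bar>)"
proof -
  have "0 \<le> e" using assms(2)[of N] by simp
  define g where "g n = e * x ^ n + (if n < N then \<bar>u n\<bar> else 0)" for n
  have "(\<lambda>n. x ^ n) sums (1 / (1 - x))" using assms(3,4) by (intro geometric_sums) simp
  then have g_sums: "g sums (e * (1 / (1 - x)) + (\<Sum>n<N. \<bar>u n\<bar>))"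
    unfolding g_def by (intro sums_add sums_mult sums_If_finite_set[where A="{..<N}", simplified])
  have le_g: "\<bar>u n * x ^ n\<bar> \<le> g n" for n
  proof (cases "n < N")
    case True
    have "\<bar>u n\<bar> * x ^ n \<le> \<bar>u n\<bar>" using assms(3,4) by (simp add: mult_left_le power_le_one)
    moreover have "0 \<le> e * x ^ n" using \<open>0 \<le> e\<close> assms(3) by simp
    ultimately show ?thesis using True assms(3) by (simp add: g_def abs_mult)
  next
    case False
    then show ?thesis
      using assms(2)[of n] assms(3) by (simp add: g_def abs_mult mult_right_mono)
  qed
  have abs_summable: "summable (\<lambda>n. \<bar>u n * x ^ n\<bar>)"
    by (rule summable_comparison_test[OF _ sums_summable[OF g_sums]]) (use le_g in auto)
  have "\<bar>\<Sum>n. u n * x ^ n\<bar> \<le> (\<Sum>n. \<bar>u n * x ^ n\<bar>)" by (rule summable_rabs[OF abs_summable])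
  also have "\<dots> \<le> e * (1 / (1 - x)) + (\<Sum>n<N. \<bar>u n\<bar>)"
    using suminf_le[OF le_g abs_summable sums_summable[OF g_sums]] sums_unique[OF g_sums] by simp
  finally show ?thesis using assms(4) by (simp add: field_simps mult_left_mono)
qed

theorem abel_limit:
  fixes a :: "nat \<Rightarrow> real"
  assumes "summable a"
  shows "((\<lambda>x. \<Sum>n. a n * x ^ n) \<longlongrightarrow> suminf a) (at_left 1)"
proof (rule tendstoI)
  fix \<epsilon> :: real assume "0 < \<epsilon>"
  define u where "u n = sum a {..n} - suminf a" for n
  have "u \<longlonglongrightarrow> 0" unfolding u_def using summable_LIMSEQ'[OF assms] by (simp add: LIM_zero)
  then obtain N where N: "\<And>n. n \<ge> N \<Longrightarrow> \<bar>u n\<bar> \<le> \<epsilon> / 2"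
    using \<open>0 < \<epsilon>\<close> by (metis LIMSEQ_D less_imp_le real_norm_def diff_zero half_gt_zero)
  obtain B where B: "\<And>n. \<bar>u n\<bar> \<le> B"
    using convergent_imp_Bseq[OF convergentI[OF \<open>u \<longlonglongrightarrow> 0\<close>]] by (metis BseqE real_norm_def)
  obtain K where K: "\<And>n. \<bar>a n\<bar> \<le> K"
    using summable_imp_Bseq[OF assms] by (metis BseqE real_norm_def)
  define S where "S = (\<Sum>n<N. \<bar>u n\<bar>)"
  have "0 \<le> S" unfolding S_def by (intro sum_nonneg) simp
  have "\<forall>\<^sub>F x in at_left 1. x \<in> {max 0 (1 - \<epsilon> / (2 * (S + 1)))<..<1}"
    using \<open>0 < \<epsilon>\<close> \<open>0 \<le> S\<close> by (intro eventually_at_left_real) auto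
  then show "\<forall>\<^sub>F x in at_left 1. dist (\<Sum>n. a n * x ^ n) (suminf a) < \<epsilon>"
  proof (rule eventually_mono)
    fix x :: real assume x: "x \<in> {max 0 (1 - \<epsilon> / (2 * (S + 1)))<..<1}"
    then have "(1 - x) * S < \<epsilon> / 2"
      using \<open>0 \<le> S\<close> \<open>0 < \<epsilon>\<close> by (simp add: field_simps)
    moreover have "dist (\<Sum>n. a n * x ^ n) (suminf a) = (1 - x) * \<bar>\<Sum>n. u n * x ^ n\<bar>"
      using abel_summation_identity[OF K B[unfolded u_def], of x] x
      by (simp add: dist_real_def u_def abs_mult)
    ultimately show "dist (\<Sum>n. a n * x ^ n) (suminf a) < \<epsilon>"
      using abel_weighted_sum_le[where u = u and N = N and e = "\<epsilon> / 2" and x = x, OF B N] x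
      unfolding S_def by auto
  qed
qed

section \<open>Passing to the limit \<open>x \<rightarrow> 1\<close>\<close>

definition fps_eval :: "real fps \<Rightarrow> real \<Rightarrow> real" where
  "fps_eval f x = (\<Sum>n. f $ n * x ^ n)"

definition abs_summable_below_1 :: "real fps \<Rightarrow> bool" where
  "abs_summable_below_1 f \<longleftrightarrow> (\<forall>x. 0 \<le> x \<longrightarrow> x < 1 \<longrightarrow> summable (\<lambda>n. \<bar>f $ n * x ^ n\<bar>))"

lemma abs_summable_below_1_bounded:
  assumes "\<And>n. \<bar>f $ n\<bar> \<le> K"
  shows "abs_summable_below_1 f"
  unfolding abs_summable_below_1_def
proof (intro allI impI)
  fix x :: real assume "0 \<le> x" "x < 1"
  then show "summable (\<lambda>n. \<bar>f $ n * x ^ n\<bar>)"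
    by (intro summable_comparison_test[OF _ summable_mult[OF summable_geometric, of x K]])
       (use assms in \<open>auto simp: abs_mult intro!: mult_right_mono\<close>)
qed

lemma fps_mult_nth_times_power:
  fixes f g :: "real fps"
  shows "(f * g) $ n * x ^ n = (\<Sum>i\<le>n. (f $ i * x ^ i) * (g $ (n - i) * x ^ (n - i)))"
proof -
  have "(f * g) $ n * x ^ n = (\<Sum>i\<le>n. f $ i * g $ (n - i) * x ^ n)"
    by (simp add: fps_mult_nth atLeast0AtMost sum_distrib_right)
  then show ?thesis by (simp add: mult_ac flip: power_add)
qed

lemma
  assumes "abs_summable_below_1 f" "abs_summable_below_1 g"
  shows abs_summable_below_1_mult: "abs_summable_below_1 (f * g)"
    and fps_eval_mult: "0 \<le> x \<Longrightarrow> x < 1 \<Longrightarrow> fps_eval (f * g) x = fps_eval f x * fps_eval g x"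
proof -
  have cauchy: "summable (\<lambda>n. \<bar>(f * g) $ n * x ^ n\<bar>) \<and> fps_eval (f * g) x = fps_eval f x * fps_eval g x"
    if "0 \<le> x" "x < 1" for x
  proof -
    define a b where "a i = f $ i * x ^ i" and "b i = g $ i * x ^ i" for i
    have a: "summable (\<lambda>n. norm (a n))" and b: "summable (\<lambda>n. norm (b n))"
      using assms that unfolding abs_summable_below_1_def a_def b_def by auto
    have prod: "(f * g) $ n * x ^ n = (\<Sum>i\<le>n. a i * b (n - i))" for n
      unfolding a_def b_def by (rule fps_mult_nth_times_power)
    have bound: "norm (norm (\<Sum>i\<le>n. a i * b (n - i))) \<le> (\<Sum>i\<le>n. norm (a i) * norm (b (n - i)))"
      for n using sum_abs[of "\<lambda>i. a i * b (n - i)" "{..n}"] by (simp add: abs_mult)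
    have "summable (\<lambda>n. norm (norm (a n)))" "summable (\<lambda>n. norm (norm (b n)))" using a b by simp_all
    then have "summable (\<lambda>n. norm (\<Sum>i\<le>n. a i * b (n - i)))"
      by (intro summable_comparison_test'[OF summable_Cauchy_product bound])
    then have "summable (\<lambda>n. \<bar>(f * g) $ n * x ^ n\<bar>)" unfolding prod by simp
    then show ?thesis
      using Cauchy_product[OF a b] unfolding fps_eval_def prod a_def b_def by simp
  qed
  then show "abs_summable_below_1 (f * g)" unfolding abs_summable_below_1_def by blast
  show "0 \<le> x \<Longrightarrow> x < 1 \<Longrightarrow> fps_eval (f * g) x = fps_eval f x * fps_eval g x"
    using cauchy by blast
qed

lemma
  assumes "\<And>i. i \<in> S \<Longrightarrow> abs_summable_below_1 (f i)"
  shows abs_summable_below_1_sum: "abs_summable_below_1 (\<Sum>i\<in>S. f i)"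
    and fps_eval_sum: "0 \<le> x \<Longrightarrow> x < 1 \<Longrightarrow> fps_eval (\<Sum>i\<in>S. f i) x = (\<Sum>i\<in>S. fps_eval (f i) x)"
proof -
  have "summable (\<lambda>n. \<bar>(\<Sum>i\<in>S. f i) $ n * x ^ n\<bar>)" if "0 \<le> x" "x < 1" for x
  proof (rule summable_comparison_test)
    show "summable (\<lambda>n. \<Sum>i\<in>S. \<bar>f i $ n * x ^ n\<bar>)"
      using assms that unfolding abs_summable_below_1_def by (intro summable_sum) auto
    show "\<exists>N. \<forall>n\<ge>N. norm \<bar>(\<Sum>i\<in>S. f i) $ n * x ^ n\<bar> \<le> (\<Sum>i\<in>S. \<bar>f i $ n * x ^ n\<bar>)"
      by (simp add: fps_sum_nth sum_distrib_right)
  qed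
  then show "abs_summable_below_1 (\<Sum>i\<in>S. f i)" unfolding abs_summable_below_1_def by blast
  show "fps_eval (\<Sum>i\<in>S. f i) x = (\<Sum>i\<in>S. fps_eval (f i) x)" if x: "0 \<le> x" "x < 1"
  proof -
    have "summable (\<lambda>n. f i $ n * x ^ n)" if "i \<in> S" for i
      using assms[OF that] x unfolding abs_summable_below_1_def by (blast intro: summable_rabs_cancel)
    then show ?thesis unfolding fps_eval_def fps_sum_nth sum_distrib_right by (rule suminf_sum)
  qed
qed

lemma
  assumes "abs_summable_below_1 f"
  shows abs_summable_below_1_const_mult: "abs_summable_below_1 (fps_const c * f)"
    and fps_eval_const_mult: "0 \<le> x \<Longrightarrow> x < 1 \<Longrightarrow> fps_eval (fps_const c * f) x = c * fps_eval f x"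
proof -
  show "abs_summable_below_1 (fps_const c * f)"
    using assms unfolding abs_summable_below_1_def by (simp add: abs_mult mult.assoc)
  show "fps_eval (fps_const c * f) x = c * fps_eval f x" if "0 \<le> x" "x < 1"
    using assms that unfolding abs_summable_below_1_def fps_eval_def
    by (simp add: mult.assoc suminf_mult summable_rabs_cancel)
qed

definition Tsum :: "nat list \<Rightarrow> real" where
  "Tsum ks = (\<Sum>N. (-1) ^ N * layer ks N)"

lemma Tbar_eq_Tsum: "Tbar ks = 2 ^ length ks * Tsum ks"
proof (cases "ks = []")
  case True
  have "(\<lambda>N. (-1) ^ N * layer [] N) = (\<lambda>N. if N = 0 then 1 else 0)"
    by (auto simp: layer_Nil)
  then have "Tsum [] = 1"
    unfolding Tsum_def using sums_unique[OF sums_single[of 0 "\<lambda>_. 1::real"]] by simp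
  with True show ?thesis by (simp add: Tbar_def)
next
  case False
  then show ?thesis unfolding Tbar_def Tsum_def layer_def
    by (simp add: mult.assoc flip: power_mult_distrib)
qed

lemma
  assumes "\<forall>x\<in>set ks. 0 < x"
  shows abs_summable_below_1_Tgen: "abs_summable_below_1 (Tgen ks)"
    and fps_eval_Tgen_tendsto: "(fps_eval (Tgen ks) \<longlongrightarrow> Tsum ks) (at_left 1)"
proof -
  have "summable (\<lambda>N. (-1) ^ N * layer ks N)" by (rule summable_signed_layer[OF assms])
  then obtain K where "\<And>N. norm ((-1) ^ N * layer ks N) \<le> K"
    using summable_imp_Bseq BseqE by blast
  then show "abs_summable_below_1 (Tgen ks)"
    by (intro abs_summable_below_1_bounded[of _ K]) (simp add: Tgen_nth)
  show "(fps_eval (Tgen ks) \<longlongrightarrow> Tsum ks) (at_left 1)"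
    unfolding fps_eval_def[abs_def] Tgen_nth Tsum_def by (rule abel_limit) fact
qed

lemma fps_eval_Rgen:
  assumes "0 \<le> x" "x < 1"
  shows "fps_eval (Rgen r k) x = (\<Sum>j=1..r. (-1) ^ (j - 1) *
           (fps_eval (Tgen (replicate (r - j) 1)) x * (\<Sum>c\<in>Iset (k + j - 1) j. fps_eval (Tgen c) x)))"
proof -
  have Tgen_ones: "abs_summable_below_1 (Tgen (replicate m 1))" for m
    by (intro abs_summable_below_1_Tgen) simp
  have Wgen: "abs_summable_below_1 (Wgen j w)" "fps_eval (Wgen j w) x = (\<Sum>c\<in>Iset w j. fps_eval (Tgen c) x)"
    for j w unfolding Wgen_def using assms
    by (auto intro!: abs_summable_below_1_sum fps_eval_sum abs_summable_below_1_Tgen simp: Iset_def)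
  have terms: "abs_summable_below_1
      (fps_const ((-1) ^ (j - 1)) * (Tgen (replicate (r - j) 1) * Wgen j (k + j - 1)))" for j
    using Tgen_ones Wgen by (intro abs_summable_below_1_const_mult abs_summable_below_1_mult)
  show ?thesis
    unfolding Rgen_def fps_eval_sum[OF terms assms]
    by (intro sum.cong refl)
       (simp only: fps_eval_const_mult[OF abs_summable_below_1_mult[OF Tgen_ones Wgen(1)] assms]
                   fps_eval_mult[OF Tgen_ones Wgen(1) assms] Wgen(2))
qed

lemma Tsum_ones_snoc:
  assumes "r \<ge> 1" "k \<ge> 1"
  shows "Tsum (replicate (r - 1) 1 @ [k]) =
           (\<Sum>j=1..r. (-1) ^ (j - 1) * (Tsum (replicate (r - j) 1) * (\<Sum>c\<in>Iset (k + j - 1) j. Tsum c)))"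
    (is "_ = ?rhs")
proof (rule tendsto_unique[OF trivial_limit_at_left_real])
  show "(fps_eval (Tgen (replicate (r - 1) 1 @ [k])) \<longlongrightarrow> Tsum (replicate (r - 1) 1 @ [k])) (at_left 1)"
    using assms by (intro fps_eval_Tgen_tendsto) auto
  have "\<forall>\<^sub>F x in at_left (1::real). 0 < x \<and> x < 1"
    using eventually_at_left_real[of 0 "1::real"] by simp
  then have "\<forall>\<^sub>F x in at_left 1. (\<Sum>j=1..r. (-1) ^ (j - 1) * (fps_eval (Tgen (replicate (r - j) 1)) x *
      (\<Sum>c\<in>Iset (k + j - 1) j. fps_eval (Tgen c) x))) = fps_eval (Tgen (replicate (r - 1) 1 @ [k])) x"
  proof (rule eventually_mono)
    fix x :: real assume "0 < x \<and> x < 1"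
    then show "(\<Sum>j=1..r. (-1) ^ (j - 1) * (fps_eval (Tgen (replicate (r - j) 1)) x *
      (\<Sum>c\<in>Iset (k + j - 1) j. fps_eval (Tgen c) x))) = fps_eval (Tgen (replicate (r - 1) 1 @ [k])) x"
      unfolding Tgen_ones_snoc_eq_Rgen[OF assms] by (intro fps_eval_Rgen[symmetric]) auto
  qed
  moreover have "((\<lambda>x. \<Sum>j=1..r. (-1) ^ (j - 1) * (fps_eval (Tgen (replicate (r - j) 1)) x *
      (\<Sum>c\<in>Iset (k + j - 1) j. fps_eval (Tgen c) x))) \<longlongrightarrow> ?rhs) (at_left 1)"
    by (intro tendsto_sum tendsto_mult tendsto_const fps_eval_Tgen_tendsto) (auto simp: Iset_def)
  ultimately show "(fps_eval (Tgen (replicate (r - 1) 1 @ [k])) \<longlongrightarrow> ?rhs) (at_left 1)"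
    by (rule Lim_transform_eventually[rotated])
qed

theorem mainTheorem6:
  fixes r k :: nat
  assumes "r \<ge> 1" and "k \<ge> 1"
  shows "Tbar (replicate (r - 1) 1 @ [k]) =
         (\<Sum>j=1..r. (-1) ^ (j - 1) * Tbar (replicate (r - j) 1) * W (k + j - 1) j)"
proof -
  have W: "W w j = 2 ^ j * (\<Sum>c\<in>Iset w j. Tsum c)" for w j
    unfolding W_def sum_distrib_left by (intro sum.cong refl) (simp add: Tbar_eq_Tsum Iset_def)
  have "Tbar (replicate (r - 1) 1 @ [k]) = 2 ^ r * Tsum (replicate (r - 1) 1 @ [k])"
    using assms(1) by (simp add: Tbar_eq_Tsum)
  also have "\<dots> = (\<Sum>j=1..r. (-1) ^ (j - 1) * (2 ^ (r - j) * Tsum (replicate (r - j) 1)) *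
                     (2 ^ j * (\<Sum>c\<in>Iset (k + j - 1) j. Tsum c)))"
    unfolding Tsum_ones_snoc[OF assms] sum_distrib_left
    by (intro sum.cong refl) (simp add: mult_ac flip: power_add)
  finally show ?thesis by (simp add: Tbar_eq_Tsum W)
qed

end
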